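(* Let $T$ be a theory. Then \[ \mathrm{SI}^\omega(\mathit{sk}^\exists(T)) \equiv \mathrm{SA}_{L(T)} + T + \mathrm{IND}(\mathit{sk}^\omega(L(T))), \] i.e. each theory derives all axioms of the other.
   Context: First-order logic with equality. Skolem symbols: for a language $L$, $\mathfrak{s}_{Qx\varphi}$ ($Q\in\{\forall,\exists\}$, $\varphi$ an $L$ formula) is a new function symbol of arity $|\mathrm{FV}(Qx\varphi)|$; $\mathit{sk}(L)=L$ plus all these symbols, $\mathit{sk}^\omega(L)=\bigcup_i\mathit{sk}^i(L)$. $\mathit{sk}^\exists,\mathit{sk}^\forall$: $\mathit{sk}^Q$ fixes atoms, commutes with $\wedge,\vee$, $\mathit{sk}^Q(\neg A)=\neg\mathit{sk}^{\overline Q}(A)$, $\mathit{sk}^Q(QxA(x,\vec y))=\mathit{sk}^Q(A(\mathfrak{s}_{QxA}(\vec y),\vec y))$ ($\vec y$ exactly the free variables of $QxA$), $\mathit{sk}^Q(\overline QxA)=\overline Qx\,\mathit{sk}^Q(A)$; elementwise on sets. $\mathrm{SA}_L$: universal closures of $\exists x\varphi(x,\vec y)\to\varphi(\mathfrak{s}_{\exists x\varphi}(\vec y),\vec y)$ and $\varphi(\mathfrak{s}_{\forall x\varphi}(\vec y),\vec y)\to\forall x\varphi(x,\vec y)$ for all $\mathit{sk}^\omega(L)$ formulas $\varphi$. $I_x\varphi=\forall\vec z(\varphi(0,\vec z)\wedge\forall x(\varphi(x,\vec z)\to\varphi(s(x),\vec z))\to\forall x\varphi(x,\vec z))$; $\mathrm{IND}(L)=\{I_x\varphi:\varphi$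 an $L$ formula$\}$. $\mathrm{SI}(T)=T+\mathit{sk}^\exists(\mathrm{IND}(L(T)))$, $\mathrm{SI}^\omega(T)=\bigcup_i\mathrm{SI}^i(T)$. *)

theory Defs
  imports Main
begin

datatype 'f trm = Var nat | Fn 'f "'f trm list"

datatype ('f, 'p) fm =
    Eq "'f trm" "'f trm"
  | Pred 'p "'f trm list"
  | Neg "('f, 'p) fm"
  | Conj "('f, 'p) fm" "('f, 'p) fm"
  | Disj "('f, 'p) fm" "('f, 'p) fm"
  | All nat "('f, 'p) fm"
  | Ex nat "('f, 'p) fm"

text \<open>Function symbols: the constant 0, the successor s, base symbols of the
  original language (a base symbol carries its arity), and Skolem symbols
  indexed by the quantified formula \<open>Q x \<phi>\<close> they belong to.\<close>
datatype ('f, 'p) fsym =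
    Zero
  | Succ
  | Base 'f nat
  | Sk "(('f, 'p) fsym, 'p) fm"

type_synonym ('f, 'p) sterm = "('f, 'p) fsym trm"
type_synonym ('f, 'p) form = "(('f, 'p) fsym, 'p) fm"

fun fvt :: "'f trm \<Rightarrow> nat set" where
  "fvt (Var n) = {n}"
| "fvt (Fn f ts) = (\<Union>t\<in>set ts. fvt t)"

fun fv :: "('f, 'p) fm \<Rightarrow> nat set" where
  "fv (Eq s t) = fvt s \<union> fvt t"
| "fv (Pred p ts) = (\<Union>t\<in>set ts. fvt t)"
| "fv (Neg A) = fv A"
| "fv (Conj A B) = fv A \<union> fv B"
| "fv (Disj A B) = fv A \<union> fv B"
| "fv (All x A) = fv A - {x}"
| "fv (Ex x A) = fv A - {x}"

fun substt :: "(nat \<Rightarrow> 'f trm) \<Rightarrow> 'f trm \<Rightarrow> 'f trm" where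
  "substt \<sigma> (Var n) = \<sigma> n"
| "substt \<sigma> (Fn f ts) = Fn f (map (substt \<sigma>) ts)"

definition fresh_bv :: "nat \<Rightarrow> nat set \<Rightarrow> ('f, 'p) fm \<Rightarrow> nat" where
  "fresh_bv x V A = (if x \<notin> V then x else Suc (Max (V \<union> fv A)))"

fun subst :: "(nat \<Rightarrow> 'f trm) \<Rightarrow> ('f, 'p) fm \<Rightarrow> ('f, 'p) fm" where
  "subst \<sigma> (Eq s t) = Eq (substt \<sigma> s) (substt \<sigma> t)"
| "subst \<sigma> (Pred p ts) = Pred p (map (substt \<sigma>) ts)"
| "subst \<sigma> (Neg A) = Neg (subst \<sigma> A)"
| "subst \<sigma> (Conj A B) = Conj (subst \<sigma> A) (subst \<sigma> B)"
| "subst \<sigma> (Disj A B) = Disj (subst \<sigma> A) (subst \<sigma> B)"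
| "subst \<sigma> (All x A) =
     (let y = fresh_bv x (\<Union>z\<in>fv A - {x}. fvt (\<sigma> z)) A
      in All y (subst (\<sigma>(x := Var y)) A))"
| "subst \<sigma> (Ex x A) =
     (let y = fresh_bv x (\<Union>z\<in>fv A - {x}. fvt (\<sigma> z)) A
      in Ex y (subst (\<sigma>(x := Var y)) A))"

definition inst1 :: "('f, 'p) fm \<Rightarrow> nat \<Rightarrow> 'f trm \<Rightarrow> ('f, 'p) fm" where
  "inst1 A x t = subst (Var(x := t)) A"

definition imp :: "('f, 'p) fm \<Rightarrow> ('f, 'p) fm \<Rightarrow> ('f, 'p) fm" where
  "imp A B = Disj (Neg A) B"

definition close :: "('f, 'p) fm \<Rightarrow> ('f, 'p) fm" where
  "close A = foldr All (sorted_list_of_set (fv A)) A"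

definition sentence :: "('f, 'p) fm \<Rightarrow> bool" where
  "sentence A \<longleftrightarrow> fv A = {}"

fun arity :: "('f, 'p) fsym \<Rightarrow> nat" where
  "arity Zero = 0"
| "arity Succ = 1"
| "arity (Base f n) = n"
| "arity (Sk \<phi>) = card (fv \<phi>)"

definition skt :: "('f, 'p) form \<Rightarrow> ('f, 'p) sterm" where
  "skt \<phi> = Fn (Sk \<phi>) (map Var (sorted_list_of_set (fv \<phi>)))"

fun fsz :: "('f, 'p) fm \<Rightarrow> nat" where
  "fsz (Eq s t) = 0"
| "fsz (Pred p ts) = 0"
| "fsz (Neg A) = Suc (fsz A)"
| "fsz (Conj A B) = Suc (fsz A + fsz B)"
| "fsz (Disj A B) = Suc (fsz A + fsz B)"
| "fsz (All x A) = Suc (fsz A)"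
| "fsz (Ex x A) = Suc (fsz A)"

lemma fsz_subst[simp]: "fsz (subst \<sigma> A) = fsz A"
  by (induction A arbitrary: \<sigma>) (simp_all add: Let_def)

text \<open>\<open>skQ True = sk\<^sup>\<exists>\<close>, \<open>skQ False = sk\<^sup>\<forall>\<close>.\<close>
function skQ :: "bool \<Rightarrow> ('f, 'p) form \<Rightarrow> ('f, 'p) form" where
  "skQ e (Eq s t) = Eq s t"
| "skQ e (Pred p ts) = Pred p ts"
| "skQ e (Neg A) = Neg (skQ (\<not> e) A)"
| "skQ e (Conj A B) = Conj (skQ e A) (skQ e B)"
| "skQ e (Disj A B) = Disj (skQ e A) (skQ e B)"
| "skQ e (All x A) =
     (if e then All x (skQ e A) else skQ e (inst1 A x (skt (All x A))))"
| "skQ e (Ex x A) =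
     (if e then skQ e (inst1 A x (skt (Ex x A))) else Ex x (skQ e A))"
  by pat_completeness auto
termination
  by (relation "measure (\<lambda>(e, A). fsz A)") (auto simp: inst1_def)

abbreviation skE :: "('f, 'p) form \<Rightarrow> ('f, 'p) form" where
  "skE \<equiv> skQ True"

record ('f, 'p) lang =
  fns :: "('f, 'p) fsym set"
  preds :: "('p \<times> nat) set"

fun wf_trm :: "('f, 'p) fsym set \<Rightarrow> ('f, 'p) sterm \<Rightarrow> bool" where
  "wf_trm F (Var n) = True"
| "wf_trm F (Fn f ts) = (f \<in> F \<and> length ts = arity f \<and> (\<forall>t\<in>set ts. wf_trm F t))"

fun wf_fm :: "('f, 'p) lang \<Rightarrow> ('f, 'p) form \<Rightarrow> bool" where
  "wf_fm L (Eq s t) = (wf_trm (fns L) s \<and> wf_trm (fns L) t)"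
| "wf_fm L (Pred p ts) = ((p, length ts) \<in> preds L \<and> (\<forall>t\<in>set ts. wf_trm (fns L) t))"
| "wf_fm L (Neg A) = wf_fm L A"
| "wf_fm L (Conj A B) = (wf_fm L A \<and> wf_fm L B)"
| "wf_fm L (Disj A B) = (wf_fm L A \<and> wf_fm L B)"
| "wf_fm L (All x A) = wf_fm L A"
| "wf_fm L (Ex x A) = wf_fm L A"

definition skL :: "('f, 'p) lang \<Rightarrow> ('f, 'p) lang" where
  "skL L = L\<lparr>fns := fns L \<union> {Sk (All x A) | x A. wf_fm L A} \<union> {Sk (Ex x A) | x A. wf_fm L A}\<rparr>"

definition skw :: "('f, 'p) lang \<Rightarrow> ('f, 'p) lang" where
  "skw L = L\<lparr>fns := (\<Union>i. fns ((skL ^^ i) L))\<rparr>"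

definition SA :: "('f, 'p) lang \<Rightarrow> ('f, 'p) form set" where
  "SA L =
     {close (imp (Ex x A) (inst1 A x (skt (Ex x A)))) | x A. wf_fm (skw L) A}
   \<union> {close (imp (inst1 A x (skt (All x A))) (All x A)) | x A. wf_fm (skw L) A}"

definition Ind :: "nat \<Rightarrow> ('f, 'p) form \<Rightarrow> ('f, 'p) form" where
  "Ind x A = close (imp (Conj (inst1 A x (Fn Zero []))
                              (All x (imp A (inst1 A x (Fn Succ [Var x])))))
                        (All x A))"

definition IND :: "('f, 'p) lang \<Rightarrow> ('f, 'p) form set" where
  "IND L = {Ind x A | x A. wf_fm L A}"

text \<open>A theory is a pair (language, set of axioms).
  \<open>SI(T) = T + sk\<^sup>\<exists>(IND(L(T)))\<close>, a theory in the language \<open>sk(L(T))\<close>.\<close>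
definition SI :: "('f, 'p) lang \<times> ('f, 'p) form set \<Rightarrow> ('f, 'p) lang \<times> ('f, 'p) form set" where
  "SI Th = (skL (fst Th), snd Th \<union> skE ` IND (fst Th))"

definition SIw :: "('f, 'p) lang \<times> ('f, 'p) form set \<Rightarrow> ('f, 'p) form set" where
  "SIw Th = (\<Union>i. snd ((SI ^^ i) Th))"

fun evt :: "('f \<Rightarrow> 'd list \<Rightarrow> 'd) \<Rightarrow> (nat \<Rightarrow> 'd) \<Rightarrow> 'f trm \<Rightarrow> 'd" where
  "evt I e (Var n) = e n"
| "evt I e (Fn f ts) = I f (map (evt I e) ts)"

fun ev :: "('f \<Rightarrow> 'd list \<Rightarrow> 'd) \<Rightarrow> ('p \<Rightarrow> 'd list \<Rightarrow> bool) \<Rightarrow> (nat \<Rightarrow> 'd) \<Rightarrow> ('f, 'p) fm \<Rightarrow> bool" where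
  "ev I R e (Eq s t) = (evt I e s = evt I e t)"
| "ev I R e (Pred p ts) = R p (map (evt I e) ts)"
| "ev I R e (Neg A) = (\<not> ev I R e A)"
| "ev I R e (Conj A B) = (ev I R e A \<and> ev I R e B)"
| "ev I R e (Disj A B) = (ev I R e A \<or> ev I R e B)"
| "ev I R e (All x A) = (\<forall>d. ev I R (e(x := d)) A)"
| "ev I R e (Ex x A) = (\<exists>d. ev I R (e(x := d)) A)"

definition models :: "('f \<Rightarrow> 'd list \<Rightarrow> 'd) \<Rightarrow> ('p \<Rightarrow> 'd list \<Rightarrow> bool) \<Rightarrow> ('f, 'p) fm set \<Rightarrow> bool" where
  "models I R S \<longleftrightarrow> (\<forall>A\<in>S. \<forall>e. ev I R e A)"

end

theory Submission
  imports Defs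
begin

(* Fix a structure and call a formula sk-equivalent if its sk\<^sup>\<exists>- and its sk\<^sup>\<forall>-Skolemization
   are both equivalent to it.  By induction on formula size, all sk\<^sup>\<omega>(L) formulas are
   sk-equivalent as soon as the Skolem axioms hold for their quantifier steps, and conversely
   sk-equivalence of all formulas yields the Skolem axioms; so SA\<^sub>L says exactly that every
   formula is sk-equivalent.  As SI\<^sup>\<omega>(sk\<^sup>\<exists>(T)) consists of sk\<^sup>\<exists>(T) and sk\<^sup>\<exists>(IND(sk\<^sup>\<omega>(L))),
   under sk-equivalence it holds iff T + IND(sk\<^sup>\<omega>(L)) does.  Finally SI\<^sup>\<omega>(sk\<^sup>\<exists>(T)) itself
   forces sk-equivalence: Skolemized induction on a variable not free in \<psi> yields
   sk\<^sup>\<forall>(\<psi>) \<longrightarrow> sk\<^sup>\<exists>(\<psi>), which is what the quantifier steps of that induction need. *)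

lemma finite_fvt [simp]: "finite (fvt t)"
  by (induction t) auto

lemma finite_fv [simp]: "finite (fv A)"
  by (induction A) auto

lemma evt_cong: "(\<And>n. n \<in> fvt t \<Longrightarrow> e n = e' n) \<Longrightarrow> evt I e t = evt I e' t"
  by (induction t) (auto intro!: arg_cong[where f = "I _"] map_cong)

lemma ev_cong: "(\<And>n. n \<in> fv A \<Longrightarrow> e n = e' n) \<Longrightarrow> ev I R e A = ev I R e' A"
proof (induction A arbitrary: e e')
  case (Eq s t)
  then show ?case by (simp add: evt_cong[of s e e'] evt_cong[of t e e'])
next
  case (Pred p ts)
  then show ?case by (auto intro!: arg_cong[where f = "R _"] map_cong evt_cong)
next
  case (Neg A)
  then show ?case by (metis ev.simps(3) fv.simps(3))
next
  case (Conj A B)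
  then show ?case by (metis Un_iff ev.simps(4) fv.simps(4))
next
  case (Disj A B)
  then show ?case by (metis Un_iff ev.simps(5) fv.simps(5))
next
  case (All x A)
  then have "ev I R (e(x := d)) A = ev I R (e'(x := d)) A" for d by (intro All.IH) auto
  then show ?case by simp
next
  case (Ex x A)
  then have "ev I R (e(x := d)) A = ev I R (e'(x := d)) A" for d by (intro Ex.IH) auto
  then show ?case by simp
qed

lemma fresh_bv_notin: "finite V \<Longrightarrow> fresh_bv x V A \<notin> V"
  unfolding fresh_bv_def by (metis Max_ge Suc_n_not_le_n UnCI finite_UnI finite_fv)

lemma evt_substt: "evt I e (substt \<sigma> t) = evt I (\<lambda>n. evt I e (\<sigma> n)) t"
  by (induction t) (auto cong: map_cong)

lemma evt_substt_upd_fresh: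
  assumes "y \<notin> (\<Union>z\<in>fv A - {x}. fvt (\<sigma> z))" and "n \<in> fv A"
  shows "evt I (e(y := d)) ((\<sigma>(x := Var y)) n) = ((\<lambda>n. evt I e (\<sigma> n))(x := d)) n"
  using assms by (cases "n = x") (auto intro!: evt_cong)

lemma ev_subst: "ev I R e (subst \<sigma> A) = ev I R (\<lambda>n. evt I e (\<sigma> n)) A"
proof (induction A arbitrary: \<sigma> e)
  case (All x A)
  let ?y = "fresh_bv x (\<Union>z\<in>fv A - {x}. fvt (\<sigma> z)) A"
  have "?y \<notin> (\<Union>z\<in>fv A - {x}. fvt (\<sigma> z))"
    by (rule fresh_bv_notin) simp
  then have "ev I R (\<lambda>n. evt I (e(?y := d)) ((\<sigma>(x := Var ?y)) n)) A
           = ev I R ((\<lambda>n. evt I e (\<sigma> n))(x := d)) A" for d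
    by (intro ev_cong evt_substt_upd_fresh)
  then show ?case by (simp add: Let_def All.IH del: fun_upd_apply)
next
  case (Ex x A)
  let ?y = "fresh_bv x (\<Union>z\<in>fv A - {x}. fvt (\<sigma> z)) A"
  have "?y \<notin> (\<Union>z\<in>fv A - {x}. fvt (\<sigma> z))"
    by (rule fresh_bv_notin) simp
  then have "ev I R (\<lambda>n. evt I (e(?y := d)) ((\<sigma>(x := Var ?y)) n)) A
           = ev I R ((\<lambda>n. evt I e (\<sigma> n))(x := d)) A" for d
    by (intro ev_cong evt_substt_upd_fresh)
  then show ?case by (simp add: Let_def Ex.IH del: fun_upd_apply)
qed (simp_all add: evt_substt comp_def)

lemma ev_inst1: "ev I R e (inst1 A x t) = ev I R (e(x := evt I e t)) A"
  unfolding inst1_def ev_subst by (rule ev_cong) simp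

lemma substt_triv: "(\<And>z. z \<in> fvt t \<Longrightarrow> \<sigma> z = Var z) \<Longrightarrow> substt \<sigma> t = t"
  by (induction t) (auto intro: map_idI)

lemma subst_triv: "(\<And>z. z \<in> fv A \<Longrightarrow> \<sigma> z = Var z) \<Longrightarrow> subst \<sigma> A = A"
proof (induction A arbitrary: \<sigma>)
  case (All x A)
  then have "(\<Union>z\<in>fv A - {x}. fvt (\<sigma> z)) = fv A - {x}" by auto
  then show ?case using All by (simp add: Let_def fresh_bv_def)
next
  case (Ex x A)
  then have "(\<Union>z\<in>fv A - {x}. fvt (\<sigma> z)) = fv A - {x}" by auto
  then show ?case using Ex by (simp add: Let_def fresh_bv_def)
qed (auto intro!: substt_triv map_idI)

lemma fsz_inst1 [simp]: "fsz (inst1 A x t) = fsz A"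
  by (simp add: inst1_def)

lemma inst1_triv: "x \<notin> fv A \<Longrightarrow> inst1 A x t = A"
  unfolding inst1_def by (rule subst_triv) auto

lemma wf_substt: "wf_trm F t \<Longrightarrow> (\<And>n. wf_trm F (\<sigma> n)) \<Longrightarrow> wf_trm F (substt \<sigma> t)"
  by (induction t) auto

lemma wf_subst: "wf_fm L A \<Longrightarrow> (\<And>n. wf_trm (fns L) (\<sigma> n)) \<Longrightarrow> wf_fm L (subst \<sigma> A)"
  by (induction A arbitrary: \<sigma>) (auto simp: Let_def wf_substt)

lemma wf_inst1: "wf_fm L A \<Longrightarrow> wf_trm (fns L) t \<Longrightarrow> wf_fm L (inst1 A x t)"
  unfolding inst1_def by (rule wf_subst) auto

lemma wf_trm_mono: "wf_trm F t \<Longrightarrow> F \<subseteq> G \<Longrightarrow> wf_trm G t"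
  by (induction t) auto

lemma wf_fm_mono: "wf_fm L A \<Longrightarrow> fns L \<subseteq> fns L' \<Longrightarrow> preds L \<subseteq> preds L' \<Longrightarrow> wf_fm L' A"
  by (induction A) (auto intro: wf_trm_mono)

lemma wf_close: "wf_fm L (close A) = wf_fm L A"
proof -
  have "wf_fm L (foldr All xs A) = wf_fm L A" for xs
    by (induction xs) auto
  then show ?thesis by (simp add: close_def)
qed

lemma wf_Ind: "Zero \<in> fns L \<Longrightarrow> Succ \<in> fns L \<Longrightarrow> wf_fm L A \<Longrightarrow> wf_fm L (Ind x A)"
  unfolding Ind_def imp_def wf_close by (auto intro!: wf_inst1)

lemma wf_skt: "Sk \<phi> \<in> F \<Longrightarrow> wf_trm F (skt \<phi>)"
  by (simp add: skt_def length_sorted_list_of_set)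

lemma ex_common_index:
  fixes P :: "nat \<Rightarrow> 'a \<Rightarrow> bool"
  assumes "finite S" and "\<And>x. x \<in> S \<Longrightarrow> \<exists>i. P i x"
    and "\<And>i j x. P i x \<Longrightarrow> i \<le> j \<Longrightarrow> P j x"
  shows "\<exists>i. \<forall>x\<in>S. P i x"
proof -
  obtain f where f: "\<And>x. x \<in> S \<Longrightarrow> P (f x) x"
    using assms(2) by metis
  have "P (Max (insert 0 (f ` S))) x" if "x \<in> S" for x
    using f[OF that] assms(1,3) that by auto
  then show ?thesis by blast
qed

lemma wf_trm_Union_chain:
  fixes F :: "nat \<Rightarrow> ('f, 'p) fsym set"
  assumes "mono F" and "wf_trm (\<Union>i. F i) t"
  shows "\<exists>i. wf_trm (F i) t"
  using assms(2)
proof (induction t)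
  case (Fn f ts)
  have up: "wf_trm (F i) t \<Longrightarrow> i \<le> j \<Longrightarrow> wf_trm (F j) t" for i j t
    using assms(1) by (auto intro: wf_trm_mono dest: monoD)
  have "\<exists>i. \<forall>t\<in>set ts. wf_trm (F i) t"
    by (rule ex_common_index[where P = "\<lambda>i t. wf_trm (F i) t"]) (use Fn up in auto)
  then obtain i where i: "\<forall>t\<in>set ts. wf_trm (F i) t" ..
  obtain k where "f \<in> F k"
    using Fn.prems by auto
  then have "f \<in> F (max i k)"
    using monoD[OF assms(1), of k "max i k"] by auto
  moreover have "\<forall>t\<in>set ts. wf_trm (F (max i k)) t"
    using i by (auto intro: up)
  ultimately show ?case
    using Fn.prems by auto
qed simp

lemma preds_skL_funpow [simp]: "preds ((skL ^^ i) L) = preds L"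
  by (induction i) (simp_all add: skL_def)

lemma fns_skw: "fns (skw L) = (\<Union>i. fns ((skL ^^ i) L))"
  by (simp add: skw_def)

lemma preds_skw [simp]: "preds (skw L) = preds L"
  by (simp add: skw_def)

lemma mono_fns_skL_funpow: "mono (\<lambda>i. fns ((skL ^^ i) L))"
  unfolding mono_iff_le_Suc by (auto simp: skL_def)

lemma wf_skL_funpow_mono: "wf_fm ((skL ^^ i) L) A \<Longrightarrow> i \<le> j \<Longrightarrow> wf_fm ((skL ^^ j) L) A"
  by (erule wf_fm_mono) (auto dest: monoD[OF mono_fns_skL_funpow])

lemma wf_skw_iff: "wf_fm (skw L) A \<longleftrightarrow> (\<exists>i. wf_fm ((skL ^^ i) L) A)"
proof
  have trm: "\<exists>i. \<forall>t\<in>set ts. wf_trm (fns ((skL ^^ i) L)) t"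
    if "\<forall>t\<in>set ts. wf_trm (fns (skw L)) t" for ts
  proof (rule ex_common_index[where P = "\<lambda>i t. wf_trm (fns ((skL ^^ i) L)) t"])
    show "\<exists>i. wf_trm (fns ((skL ^^ i) L)) t" if "t \<in> set ts" for t
      using that \<open>\<forall>t\<in>set ts. _\<close>
      by (intro wf_trm_Union_chain[OF mono_fns_skL_funpow]) (simp add: fns_skw)
    show "wf_trm (fns ((skL ^^ j) L)) t"
      if "wf_trm (fns ((skL ^^ i) L)) t" "i \<le> j" for i j t
      using that by (auto intro: wf_trm_mono dest: monoD[OF mono_fns_skL_funpow])
  qed simp
  have bin: "\<exists>k. wf_fm ((skL ^^ k) L) A \<and> wf_fm ((skL ^^ k) L) B"
    if "wf_fm ((skL ^^ i) L) A" "wf_fm ((skL ^^ j) L) B" for i j A B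
    using that by (meson max.cobounded1 max.cobounded2 wf_skL_funpow_mono)
  show "wf_fm (skw L) A \<Longrightarrow> \<exists>i. wf_fm ((skL ^^ i) L) A"
  proof (induction A)
    case (Eq s t)
    then show ?case using trm[of "[s, t]"] by auto
  next
    case (Pred p ts)
    then show ?case using trm[of ts] by auto
  next
    case (Conj A B)
    then show ?case using bin by fastforce
  next
    case (Disj A B)
    then show ?case using bin by fastforce
  qed auto
  show "\<exists>i. wf_fm ((skL ^^ i) L) A \<Longrightarrow> wf_fm (skw L) A"
    by (auto elim!: wf_fm_mono simp: fns_skw)
qed

lemma wf_skw_inst1_skt:
  assumes "wf_fm (skw L) A"
  shows "wf_fm (skw L) (inst1 A x (skt (Ex x A)))" and "wf_fm (skw L) (inst1 A x (skt (All x A)))"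
proof -
  obtain i where "wf_fm ((skL ^^ i) L) A"
    using assms wf_skw_iff by blast
  then have "Sk (Ex x A) \<in> fns ((skL ^^ Suc i) L)" and "Sk (All x A) \<in> fns ((skL ^^ Suc i) L)"
    by (auto simp: skL_def)
  then have "Sk (Ex x A) \<in> fns (skw L)" and "Sk (All x A) \<in> fns (skw L)"
    unfolding fns_skw by blast+
  then show "wf_fm (skw L) (inst1 A x (skt (Ex x A)))" and "wf_fm (skw L) (inst1 A x (skt (All x A)))"
    by (auto intro!: wf_inst1 wf_skt assms)
qed

lemma IND_skw: "IND (skw L) = (\<Union>j. IND ((skL ^^ Suc j) L))"
  unfolding IND_def wf_skw_iff
  by (blast intro: wf_skL_funpow_mono[OF _ le_SucI[OF order_refl]])

lemma SI_funpow:
  "(SI ^^ n) Th = ((skL ^^ n) (fst Th), snd Th \<union> (\<Union>j<n. skE ` IND ((skL ^^ j) (fst Th))))"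
  by (induction n) (auto simp: SI_def lessThan_Suc)

lemma SIw_skL: "SIw (skL L, S) = S \<union> skE ` IND (skw L)"
  by (auto simp: SIw_def SI_funpow IND_skw funpow_Suc_right simp del: funpow.simps)

lemma models_Un [simp]: "models I R (S \<union> S') \<longleftrightarrow> models I R S \<and> models I R S'"
  by (auto simp: models_def)

lemma valid_foldr_All: "(\<forall>e. ev I R e (foldr All xs A)) \<longleftrightarrow> (\<forall>e. ev I R e A)"
proof (induction xs)
  case (Cons x xs)
  have "(\<forall>e. ev I R e (All x B)) \<longleftrightarrow> (\<forall>e. ev I R e B)" for B
    by simp (metis fun_upd_triv)
  then show ?case using Cons by simp
qed simp

lemma valid_close: "(\<forall>e. ev I R e (close A)) \<longleftrightarrow> (\<forall>e. ev I R e A)"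
  unfolding close_def by (rule valid_foldr_All)

lemma skE_foldr_All: "skE (foldr All xs A) = foldr All xs (skE A)"
  by (induction xs) auto

abbreviation skA :: "('f, 'p) form \<Rightarrow> ('f, 'p) form" where
  "skA \<equiv> skQ False"

definition sk_equiv :: "(('f, 'p) fsym \<Rightarrow> 'd list \<Rightarrow> 'd) \<Rightarrow> ('p \<Rightarrow> 'd list \<Rightarrow> bool) \<Rightarrow> ('f, 'p) form \<Rightarrow> bool"
  where "sk_equiv I R A \<longleftrightarrow>
    (\<forall>e. (ev I R e (skE A) \<longleftrightarrow> ev I R e A) \<and> (ev I R e (skA A) \<longleftrightarrow> ev I R e A))"

definition sk_axioms_hold ::
    "(('f, 'p) fsym \<Rightarrow> 'd list \<Rightarrow> 'd) \<Rightarrow> ('p \<Rightarrow> 'd list \<Rightarrow> bool) \<Rightarrow> nat \<Rightarrow> ('f, 'p) form \<Rightarrow> bool"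
  where "sk_axioms_hold I R x A \<longleftrightarrow>
    (\<forall>e. (ev I R e (Ex x A) \<longrightarrow> ev I R e (inst1 A x (skt (Ex x A)))) \<and>
         (ev I R e (inst1 A x (skt (All x A))) \<longrightarrow> ev I R e (All x A)))"

lemma sk_axioms_holdD:
  assumes "sk_axioms_hold I R x A"
  shows "ev I R e (inst1 A x (skt (Ex x A))) \<longleftrightarrow> ev I R e (Ex x A)"
    and "ev I R e (inst1 A x (skt (All x A))) \<longleftrightarrow> ev I R e (All x A)"
  using assms by (auto simp: sk_axioms_hold_def ev_inst1)

lemma sk_axioms_hold_if_sk_equiv:
  assumes "sk_equiv I R (Ex x A)" and "sk_equiv I R (All x A)"
    and "sk_equiv I R (inst1 A x (skt (Ex x A)))" and "sk_equiv I R (inst1 A x (skt (All x A)))"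
  shows "sk_axioms_hold I R x A"
  using assms unfolding sk_axioms_hold_def sk_equiv_def by (metis skQ.simps(6,7))

lemma sk_equiv_if_sk_axioms_hold:
  assumes axioms: "\<And>x A. wf_fm (skw L) A \<Longrightarrow> sk_equiv I R A
      \<Longrightarrow> sk_equiv I R (inst1 A x (skt (Ex x A))) \<Longrightarrow> sk_equiv I R (inst1 A x (skt (All x A)))
      \<Longrightarrow> sk_axioms_hold I R x A"
    and "wf_fm (skw L) \<phi>"
  shows "sk_equiv I R \<phi>"
  using assms(2)
proof (induction \<phi> rule: measure_induct_rule[of fsz])
  case (less \<phi>)
  have quantified: "sk_equiv I R (All x A) \<and> sk_equiv I R (Ex x A)"
    if "fsz A < fsz \<phi>" and "wf_fm (skw L) A" for x A
  proof -
    have IH: "sk_equiv I R A" "sk_equiv I R (inst1 A x (skt (Ex x A)))"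
      "sk_equiv I R (inst1 A x (skt (All x A)))"
      using that by (auto intro!: less.IH wf_skw_inst1_skt)
    then have "sk_axioms_hold I R x A"
      using axioms that(2) by blast
    with IH show ?thesis
      unfolding sk_equiv_def by (simp add: sk_axioms_holdD)
  qed
  show ?case
    using less by (cases \<phi>) (auto simp: quantified, auto simp: sk_equiv_def)
qed

(* The premises of an induction axiom sit in negative position, so for u \<notin> fv \<psi> its
   Skolemization is  sk\<^sup>\<forall>(\<psi>) \<and> (\<not> sk\<^sup>\<exists>(\<psi>) \<or> sk\<^sup>\<forall>(\<psi>)) \<longrightarrow> (\<forall>u. sk\<^sup>\<exists>(\<psi>)). *)
lemma skA_imp_skE_if_valid_skE_Ind:
  assumes "u \<notin> fv \<psi>" and "\<forall>e. ev I R e (skE (Ind u \<psi>))" and "ev I R e (skA \<psi>)"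
  shows "ev I R e (skE \<psi>)"
proof -
  have "inst1 \<psi> u t = \<psi>" "inst1 (imp \<psi> \<psi>) u t = imp \<psi> \<psi>" for t
    using assms(1) by (simp_all add: inst1_triv imp_def)
  then have "\<forall>e. ev I R e (Disj (Neg (Conj (skA \<psi>) (Disj (Neg (skE \<psi>)) (skA \<psi>)))) (All u (skE \<psi>)))"
    using assms(2) by (simp add: Ind_def close_def skE_foldr_All valid_foldr_All imp_def)
  then have "\<forall>d. ev I R (e(u := d)) (skE \<psi>)"
    using assms(3) by simp
  then show ?thesis by (metis fun_upd_triv)
qed

lemma skA_imp_skE_if_models_SIw:
  assumes "models I R (SIw (skL L, S))" and "wf_fm (skw L) \<psi>" and "ev I R e (skA \<psi>)"
  shows "ev I R e (skE \<psi>)"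
proof -
  obtain u where u: "u \<notin> fv \<psi>"
    using ex_new_if_finite[OF infinite_UNIV_nat finite_fv] by blast
  have "skE (Ind u \<psi>) \<in> SIw (skL L, S)"
    using assms(2) by (auto simp: SIw_skL IND_def)
  then have "\<forall>e. ev I R e (skE (Ind u \<psi>))"
    using assms(1) by (simp add: models_def)
  then show ?thesis
    using skA_imp_skE_if_valid_skE_Ind[OF u] assms(3) by blast
qed

lemma sk_equiv_if_models_SIw:
  assumes "models I R (SIw (skL L, S))" and "wf_fm (skw L) A"
  shows "sk_equiv I R A"
proof (rule sk_equiv_if_sk_axioms_hold[OF _ assms(2)])
  fix x A
  assume wf: "wf_fm (skw L) A" and equiv: "sk_equiv I R A"
    "sk_equiv I R (inst1 A x (skt (Ex x A)))" "sk_equiv I R (inst1 A x (skt (All x A)))"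
  note skA_imp_skE = skA_imp_skE_if_models_SIw[OF assms(1)]
  show "sk_axioms_hold I R x A"
    unfolding sk_axioms_hold_def
  proof (intro allI conjI impI)
    fix e
    assume "ev I R e (Ex x A)"
    then have "ev I R e (skA (Ex x A))"
      using equiv(1) by (simp add: sk_equiv_def)
    then have "ev I R e (skE (Ex x A))"
      by (rule skA_imp_skE[rotated]) (simp add: wf)
    then show "ev I R e (inst1 A x (skt (Ex x A)))"
      using equiv(2) by (simp add: sk_equiv_def)
  next
    fix e
    assume "ev I R e (inst1 A x (skt (All x A)))"
    then have "\<not> ev I R e (skE (Neg (All x A)))"
      using equiv(3) by (simp add: sk_equiv_def)
    then have "\<not> ev I R e (skA (Neg (All x A)))"
      using skA_imp_skE[of "Neg (All x A)"] wf by auto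
    then show "ev I R e (All x A)"
      using equiv(1) by (simp add: sk_equiv_def)
  qed
qed

lemma models_SA_iff_sk_axioms_hold:
  "models I R (SA L) \<longleftrightarrow> (\<forall>x A. wf_fm (skw L) A \<longrightarrow> sk_axioms_hold I R x A)"
proof -
  have "models I R (SA L) \<longleftrightarrow> (\<forall>x A. wf_fm (skw L) A \<longrightarrow>
      (\<forall>e. ev I R e (close (imp (Ex x A) (inst1 A x (skt (Ex x A)))))) \<and>
      (\<forall>e. ev I R e (close (imp (inst1 A x (skt (All x A))) (All x A)))))"
    unfolding models_def SA_def by blast
  then show ?thesis
    unfolding valid_close sk_axioms_hold_def imp_def ev.simps(3,5) all_conj_distrib imp_conv_disj .
qed

lemma models_SA_iff_sk_equiv:
  "models I R (SA L) \<longleftrightarrow> (\<forall>A. wf_fm (skw L) A \<longrightarrow> sk_equiv I R A)"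
proof
  assume "models I R (SA L)"
  then show "\<forall>A. wf_fm (skw L) A \<longrightarrow> sk_equiv I R A"
    by (auto simp: models_SA_iff_sk_axioms_hold intro: sk_equiv_if_sk_axioms_hold)
next
  assume "\<forall>A. wf_fm (skw L) A \<longrightarrow> sk_equiv I R A"
  then show "models I R (SA L)"
    by (auto simp: models_SA_iff_sk_axioms_hold intro!: sk_axioms_hold_if_sk_equiv wf_skw_inst1_skt)
qed

lemma models_skE_image_iff:
  "(\<And>A. A \<in> S \<Longrightarrow> sk_equiv I R A) \<Longrightarrow> models I R (skE ` S) \<longleftrightarrow> models I R S"
  by (auto simp: models_def sk_equiv_def)

theorem proposition6:
  fixes L :: "('f, 'p) lang" and T :: "('f, 'p) form set"
    and I :: "('f, 'p) fsym \<Rightarrow> 'd list \<Rightarrow> 'd" and R :: "'p \<Rightarrow> 'd list \<Rightarrow> bool"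
  assumes "Zero \<in> fns L" and "Succ \<in> fns L"
    and "\<forall>\<phi>. Sk \<phi> \<notin> fns L"
    and "\<forall>A\<in>T. wf_fm L A \<and> sentence A"
  shows "models I R (SIw (skL L, skE ` T)) \<longleftrightarrow> models I R (SA L \<union> T \<union> IND (skw L))"
proof -
  have "Zero \<in> fns (skw L)" "Succ \<in> fns (skw L)"
    using assms(1,2) by (auto simp: fns_skw intro!: exI[where x = 0])
  moreover have "wf_fm (skw L) A" if "A \<in> T" for A
    using assms(4) that wf_skw_iff[of L A] funpow_0 by metis
  ultimately have wf: "wf_fm (skw L) A" if "A \<in> T \<union> IND (skw L)" for A
    using that by (auto simp: IND_def intro: wf_Ind)
  have SIw: "models I R (SIw (skL L, skE ` T)) \<longleftrightarrow> models I R (T \<union> IND (skw L))"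
    if "\<forall>A. wf_fm (skw L) A \<longrightarrow> sk_equiv I R A"
    unfolding SIw_skL image_Un[symmetric] using that wf by (intro models_skE_image_iff) blast
  show ?thesis
  proof
    assume H: "models I R (SIw (skL L, skE ` T))"
    then have "\<forall>A. wf_fm (skw L) A \<longrightarrow> sk_equiv I R A"
      by (blast intro: sk_equiv_if_models_SIw)
    with H show "models I R (SA L \<union> T \<union> IND (skw L))"
      using SIw by (simp add: models_SA_iff_sk_equiv)
  next
    assume H: "models I R (SA L \<union> T \<union> IND (skw L))"
    then have "\<forall>A. wf_fm (skw L) A \<longrightarrow> sk_equiv I R A"
      by (simp add: models_SA_iff_sk_equiv)
    with H show "models I R (SIw (skL L, skE ` T))"
      using SIw by simp
  qed
qed

end
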